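(* Let $g\in\mathbb{L}$ with $g>\mathbb{R}$. Then the family $(\log_n(g))_{n\in\mathbb{N}}$ is multipliable, i.e. the family $(\log\log_n(g))_{n\in\mathbb{N}}=(\log_{n+1}(g))_{n\in\mathbb{N}}$ is summable.
   Context: Fix distinct symbols $\ell_\alpha$ for all ordinals. Exponent sequences $r=(r_\beta)$: reals over all ordinals, zero beyond some ordinal; monomials $\ell^r=\prod\ell_\beta^{r_\beta}$ form the ordered group $\mathfrak{L}$ ($\ell^r\ell^s=\ell^{r+s}$; $\ell^r\prec\ell^s$ iff $r\ne s$ and $r_\beta<s_\beta$ at the least differing $\beta$); $\ell_\alpha$ has exponent $1$ at $\alpha$, else $0$. $\mathbb{L}_{<\alpha}=\mathbb{R}[[\mathfrak{L}_{<\alpha}]]$ ($\mathfrak{L}_{<\alpha}$: monomials with $r_\beta=0$ for $\beta\ge\alpha$) is the Hahn field of series with well-based support (no infinite strictly increasing sequence), ordered by sign of leading coefficient; $\mathbb{L}=\bigcup\mathbb{L}_{<\alpha}$; $\mathfrak{d}(f)$ = largest monomial of $\operatorname{supp}f$, $f\prec g$ iff $\mathfrak{d}(f)\prec\mathfrak{d}(g)$. A family $(f_i)_{i\in I}$ ($I$ a set) is summable if all $f_i$ lie in one $\mathbb{L}_{<\alpha}$, $\bigcup\operatorname{supp}f_i$ is well-based, and each monomial lies in $\operatorname{supp}f_i$ for only finitely many $i$. Logarithm: $\log\ell^r=\sum r_\beta\ell_{\beta+1}$, and for $f>0$, $f=c\,\mathfrak{d}(f)(1+\epsilon)$ with $c\in\mathbb{R}^{>0}$,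 $\epsilon\prec1$: $\log f=\log\mathfrak{d}(f)+\log c+\sum_{n\ge1}\frac{(-1)^{n-1}}{n}\epsilon^n$. A family $(f_i)$ in $\mathbb{L}^{>0}$ is multipliable if $(\log f_i)$ is summable. $\log_0(g)=g$, $\log_{n+1}(g)=\log(\log_n(g))$ for $g>\mathbb{R}$ (these remain $>\mathbb{R}$). *)

theory Defs
  imports Complex_Main "HOL-Library.Countable_Set"
begin

text \<open>Ordinals are modelled by a wellorder type 'o.
  Exponent sequences / monomials: functions 'o => real (bounded support is
  enforced through the fields L_{<alpha}).\<close>

type_synonym 'o mon = "'o \<Rightarrow> real"
type_synonym 'o ser = "'o mon \<Rightarrow> real"

definition mon_less :: "'o::wellorder mon \<Rightarrow> 'o mon \<Rightarrow> bool" where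
  "mon_less r s \<longleftrightarrow> r \<noteq> s \<and>
     r (LEAST \<beta>. r \<beta> \<noteq> s \<beta>) < s (LEAST \<beta>. r \<beta> \<noteq> s \<beta>)"

definition mon_mult :: "'o mon \<Rightarrow> 'o mon \<Rightarrow> 'o mon" where
  "mon_mult r s = (\<lambda>\<beta>. r \<beta> + s \<beta>)"

definition mon_one :: "'o mon" where
  "mon_one = (\<lambda>\<beta>. 0)"

definition ordsucc :: "'o::wellorder \<Rightarrow> 'o" where
  "ordsucc \<beta> = (LEAST \<gamma>. \<beta> < \<gamma>)"

definition ell :: "'o \<Rightarrow> 'o mon" where
  "ell \<gamma> = (\<lambda>\<beta>. if \<beta> = \<gamma> then 1 else 0)"

definition supp :: "'o ser \<Rightarrow> 'o mon set" where
  "supp f = {m. f m \<noteq> 0}"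

definition well_based :: "'o::wellorder mon set \<Rightarrow> bool" where
  "well_based S \<longleftrightarrow> \<not> (\<exists>h::nat \<Rightarrow> 'o mon. \<forall>n. h n \<in> S \<and> mon_less (h n) (h (Suc n)))"

definition mons_below :: "'o::wellorder \<Rightarrow> 'o mon set" where
  "mons_below \<alpha> = {r. \<forall>\<beta>. \<alpha> \<le> \<beta> \<longrightarrow> r \<beta> = 0}"

definition Lbelow :: "'o::wellorder \<Rightarrow> 'o ser set" where
  "Lbelow \<alpha> = {f. supp f \<subseteq> mons_below \<alpha> \<and> well_based (supp f)}"

definition Lser :: "'o::wellorder ser set" where
  "Lser = (\<Union>\<alpha>. Lbelow \<alpha>)"

definition ser_const :: "real \<Rightarrow> 'o ser" where
  "ser_const c = (\<lambda>m. if m = mon_one then c else 0)"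

definition ser_monom :: "'o mon \<Rightarrow> 'o ser" where
  "ser_monom n = (\<lambda>m. if m = n then 1 else 0)"

definition ser_scale :: "real \<Rightarrow> 'o ser \<Rightarrow> 'o ser" where
  "ser_scale c f = (\<lambda>m. c * f m)"

definition ser_add :: "'o ser \<Rightarrow> 'o ser \<Rightarrow> 'o ser" where
  "ser_add f g = (\<lambda>m. f m + g m)"

definition ser_mult :: "'o ser \<Rightarrow> 'o ser \<Rightarrow> 'o ser" where
  "ser_mult f g = (\<lambda>m. \<Sum>p\<in>{p. fst p \<in> supp f \<and> snd p \<in> supp g \<and> mon_mult (fst p) (snd p) = m}.
                        f (fst p) * g (snd p))"

primrec ser_pow :: "'o ser \<Rightarrow> nat \<Rightarrow> 'o ser" where
  "ser_pow f 0 = ser_const 1"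
| "ser_pow f (Suc n) = ser_mult f (ser_pow f n)"

definition dom_mon :: "'o::wellorder ser \<Rightarrow> 'o mon" where
  "dom_mon f = (THE m. m \<in> supp f \<and> (\<forall>m'\<in>supp f. m' = m \<or> mon_less m' m))"

definition ser_pos :: "'o::wellorder ser \<Rightarrow> bool" where
  "ser_pos f \<longleftrightarrow> supp f \<noteq> {} \<and> f (dom_mon f) > 0"

definition ser_less :: "'o::wellorder ser \<Rightarrow> 'o ser \<Rightarrow> bool" where
  "ser_less f g \<longleftrightarrow> ser_pos (\<lambda>m. g m - f m)"

definition pos_infinite :: "'o::wellorder ser \<Rightarrow> bool" where
  "pos_infinite g \<longleftrightarrow> (\<forall>c::real. ser_less (ser_const c) g)"

definition summable_fam :: "('i \<Rightarrow> 'o::wellorder ser) \<Rightarrow> 'i set \<Rightarrow> bool" where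
  "summable_fam F I \<longleftrightarrow>
     (\<exists>\<alpha>. \<forall>i\<in>I. F i \<in> Lbelow \<alpha>) \<and>
     well_based (\<Union>i\<in>I. supp (F i)) \<and>
     (\<forall>m. finite {i\<in>I. m \<in> supp (F i)})"

definition sum_fam :: "('i \<Rightarrow> 'o ser) \<Rightarrow> 'i set \<Rightarrow> 'o ser" where
  "sum_fam F I = (\<lambda>m. \<Sum>i\<in>{i\<in>I. m \<in> supp (F i)}. F i m)"

definition log_mon :: "'o::wellorder mon \<Rightarrow> 'o ser" where
  "log_mon r = sum_fam (\<lambda>\<beta>. ser_scale (r \<beta>) (ser_monom (ell (ordsucc \<beta>)))) UNIV"

text \<open>for f > 0, f = c d(f) (1 + eps)\<close>
definition Llog :: "'o::wellorder ser \<Rightarrow> 'o ser" where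
  "Llog f = (let d = dom_mon f; c = f d;
                 eps = (\<lambda>m. f (mon_mult m d) / c - (if m = mon_one then 1 else 0))
             in ser_add (ser_add (log_mon d) (ser_const (ln c)))
                  (sum_fam (\<lambda>n. ser_scale ((-1) ^ (n - 1) / real n) (ser_pow eps n)) {1..}))"

definition multipliable :: "('i \<Rightarrow> 'o::wellorder ser) \<Rightarrow> 'i set \<Rightarrow> bool" where
  "multipliable F I \<longleftrightarrow> (\<forall>i\<in>I. F i \<in> Lser \<and> ser_pos (F i)) \<and> summable_fam (\<lambda>i. Llog (F i)) I"

definition logn :: "nat \<Rightarrow> 'o::wellorder ser \<Rightarrow> 'o ser" where
  "logn n = Llog ^^ n"

end

theory Submission
  imports Defs
begin

(* Write g = c d(g) (1 + eps) with d(g) > 1, and let beta be the first index at which the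
   exponent of d(g) is nonzero.  Then log g is dominated by l_gamma, gamma = beta + 1, with a
   positive coefficient, and from then on the k-th iterated logarithm is dominated by
   l_(gamma+k) with coefficient 1, so that taking one more logarithm produces l_(gamma+k+1) plus
   powers of its infinitesimal part.  By induction, all these infinitesimal parts lie in the
   translates (l_(gamma+1) ... l_(gamma+k))^-1 H of one monoid H, generated by the infinitesimal
   part of log g and by these products; H is well-based by Neumann's lemma.  As the translating
   monomials strictly decrease, every monomial occurs in only finitely many iterated logarithms,
   and all of them lie in L_<alpha for any alpha above the countably many ordinals gamma + k. *)

section \<open>Monomials\<close>

lemma mon_less_iff:
  "mon_less (r::'o::wellorder mon) s \<longleftrightarrow> (\<exists>\<beta>. r \<beta> < s \<beta> \<and> (\<forall>\<gamma><\<beta>. r \<gamma> = s \<gamma>))"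
proof
  assume "mon_less r s"
  then show "\<exists>\<beta>. r \<beta> < s \<beta> \<and> (\<forall>\<gamma><\<beta>. r \<gamma> = s \<gamma>)"
    unfolding mon_less_def using not_less_Least by blast
next
  assume "\<exists>\<beta>. r \<beta> < s \<beta> \<and> (\<forall>\<gamma><\<beta>. r \<gamma> = s \<gamma>)"
  then obtain \<beta> where \<beta>: "r \<beta> < s \<beta>" "\<forall>\<gamma><\<beta>. r \<gamma> = s \<gamma>" by blast
  then have "(LEAST \<beta>. r \<beta> \<noteq> s \<beta>) = \<beta>"
    by (intro Least_equality) (auto simp: not_less[symmetric])
  with \<beta> show "mon_less r s" unfolding mon_less_def by auto
qed

lemma mon_less_trans:
  assumes "mon_less (r::'o::wellorder mon) s" "mon_less s t"
  shows "mon_less r t"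
proof -
  obtain a where a: "r a < s a" "\<forall>\<gamma><a. r \<gamma> = s \<gamma>" using assms(1) by (auto simp: mon_less_iff)
  obtain b where b: "s b < t b" "\<forall>\<gamma><b. s \<gamma> = t \<gamma>" using assms(2) by (auto simp: mon_less_iff)
  show ?thesis
    unfolding mon_less_iff
  proof (intro exI conjI allI impI)
    show "r (min a b) < t (min a b)"
      using a b by (cases a b rule: linorder_cases) (auto simp: min_def)
    show "r \<gamma> = t \<gamma>" if "\<gamma> < min a b" for \<gamma>
      using a b that by simp
  qed
qed

lemma mon_less_total:
  assumes "(r::'o::wellorder mon) \<noteq> s"
  shows "mon_less r s \<or> mon_less s r"
proof -
  define \<mu> where "\<mu> = (LEAST \<beta>. r \<beta> \<noteq> s \<beta>)"
  have "r \<mu> \<noteq> s \<mu>"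
    unfolding \<mu>_def by (rule LeastI_ex) (use assms in blast)
  moreover have "\<forall>\<gamma><\<mu>. r \<gamma> = s \<gamma>"
    unfolding \<mu>_def using not_less_Least by blast
  ultimately show ?thesis
    unfolding mon_less_iff by (metis linorder_neq_iff)
qed

definition mon_le :: "'o::wellorder mon \<Rightarrow> 'o mon \<Rightarrow> bool" where
  "mon_le r s \<longleftrightarrow> r = s \<or> mon_less r s"

definition minv :: "'o mon \<Rightarrow> 'o mon" where
  "minv r = (\<lambda>\<beta>. - r \<beta>)"

definition mon_div :: "'o mon \<Rightarrow> 'o mon \<Rightarrow> 'o mon" where
  "mon_div r s = (\<lambda>\<beta>. r \<beta> - s \<beta>)"

lemma mon_less_irrefl: "\<not> mon_less (r::'o::wellorder mon) r"
  by (simp add: mon_less_def)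

(* Exponent vectors under pointwise addition and the lexicographic order form a linearly ordered
   abelian group, so the library's additive names (add_mono, sum_list, ...) below refer to the
   multiplication of monomials. *)

interpretation mon: linordered_ab_group_add mon_mult mon_one mon_div minv
  mon_le "mon_less :: 'o::wellorder mon \<Rightarrow> _"
proof unfold_locales
  fix r s t :: "'o mon"
  show "mon_less r s \<longleftrightarrow> mon_le r s \<and> \<not> mon_le s r"
    using mon_less_trans[of r s r] mon_less_irrefl unfolding mon_le_def by blast
  show "mon_le r t" if "mon_le r s" "mon_le s t"
    using that mon_less_trans unfolding mon_le_def by blast
  show "r = s" if "mon_le r s" "mon_le s r"
    using that mon_less_trans[of r s r] mon_less_irrefl unfolding mon_le_def by blast
  show "mon_le r s \<or> mon_le s r"
    using mon_less_total unfolding mon_le_def by blast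
  show "mon_le (mon_mult t r) (mon_mult t s)" if "mon_le r s"
    using that unfolding mon_le_def by (auto simp: mon_less_iff mon_mult_def)
  show "mon_le r r" by (simp add: mon_le_def)
qed (simp_all add: mon_mult_def mon_one_def minv_def mon_div_def algebra_simps)

lemma one_less_ell: "mon_less mon_one (ell (\<gamma>::'o::wellorder))"
  by (auto simp: mon_less_iff mon_one_def ell_def intro!: exI[of _ \<gamma>])

lemma ell_less_ell: "(\<gamma>::'o::wellorder) < \<delta> \<Longrightarrow> mon_less (ell \<delta>) (ell \<gamma>)"
  by (auto simp: mon_less_iff ell_def intro!: exI[of _ \<gamma>])

lemma ell_antimono: "(\<gamma>::'o::wellorder) \<le> \<delta> \<Longrightarrow> mon_le (ell \<delta>) (ell \<gamma>)"
  using ell_less_ell[of \<gamma> \<delta>] by (auto simp: mon_le_def le_less)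

lemma ell_inject: "ell \<gamma> = ell \<delta> \<longleftrightarrow> \<gamma> = \<delta>"
  by (metis ell_def zero_neq_one)

lemma mons_below_mult: "r \<in> mons_below \<alpha> \<Longrightarrow> s \<in> mons_below \<alpha> \<Longrightarrow> mon_mult r s \<in> mons_below \<alpha>"
  by (simp add: mons_below_def mon_mult_def)

lemma mons_below_minv: "r \<in> mons_below \<alpha> \<Longrightarrow> minv r \<in> mons_below \<alpha>"
  by (simp add: mons_below_def minv_def)

lemma mons_below_div: "r \<in> mons_below \<alpha> \<Longrightarrow> s \<in> mons_below \<alpha> \<Longrightarrow> mon_div r s \<in> mons_below \<alpha>"
  by (simp add: mons_below_def mon_div_def)

lemma mons_below_one: "mon_one \<in> mons_below \<alpha>"
  by (simp add: mons_below_def mon_one_def)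

lemma mons_below_ell: "\<gamma> < \<alpha> \<Longrightarrow> ell \<gamma> \<in> mons_below \<alpha>"
  by (auto simp: mons_below_def ell_def)

lemma mons_below_mono: "\<alpha> \<le> \<beta> \<Longrightarrow> mons_below \<alpha> \<subseteq> mons_below \<beta>"
  by (auto simp: mons_below_def)

lemma Lbelow_mono: "\<alpha> \<le> \<beta> \<Longrightarrow> Lbelow \<alpha> \<subseteq> Lbelow \<beta>"
  using mons_below_mono by (fastforce simp: Lbelow_def)

section \<open>Well-based sets\<close>

lemma well_based_iff_has_max:
  fixes S :: "'o::wellorder mon set"
  shows "well_based S \<longleftrightarrow> (\<forall>T\<subseteq>S. T \<noteq> {} \<longrightarrow> (\<exists>m\<in>T. \<forall>x\<in>T. mon_le x m))"
    (is "_ \<longleftrightarrow> ?max")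
proof -
  define r where "r = {(x, y). x \<in> S \<and> y \<in> S \<and> mon_less y x}"
  have "well_based S \<longleftrightarrow> wf r"
    unfolding well_based_def wf_iff_no_infinite_down_chain r_def by auto
  also have "wf r \<longleftrightarrow> ?max"
  proof
    assume "wf r"
    show ?max
    proof (intro allI impI)
      fix T assume "T \<subseteq> S" "T \<noteq> {}"
      then obtain z where "z \<in> T" "\<forall>y. (y, z) \<in> r \<longrightarrow> y \<notin> T"
        using \<open>wf r\<close> unfolding wf_eq_minimal by blast
      with \<open>T \<subseteq> S\<close> show "\<exists>m\<in>T. \<forall>x\<in>T. mon_le x m"
        unfolding r_def mon.not_less[symmetric] by blast
    qed
  next
    assume max: ?max
    show "wf r"
      unfolding wf_eq_minimal
    proof (intro allI impI)
      fix Q :: "'o mon set" and x assume "x \<in> Q"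
      show "\<exists>z\<in>Q. \<forall>y. (y, z) \<in> r \<longrightarrow> y \<notin> Q"
      proof (cases "Q \<inter> S = {}")
        case True
        with \<open>x \<in> Q\<close> show ?thesis unfolding r_def by blast
      next
        case False
        then obtain m where "m \<in> Q \<inter> S" "\<forall>y\<in>Q \<inter> S. mon_le y m"
          using max by (meson inf_le2)
        then show ?thesis unfolding r_def mon.not_less[symmetric] by blast
      qed
    qed
  qed
  finally show ?thesis .
qed

lemma well_based_subset: "well_based S \<Longrightarrow> T \<subseteq> S \<Longrightarrow> well_based T"
  unfolding well_based_def by blast

lemma well_based_Un:
  assumes "well_based S" "well_based S'"
  shows "well_based (S \<union> S')"
  unfolding well_based_iff_has_max
proof (intro allI impI)
  fix T assume T: "T \<subseteq> S \<union> S'" "T \<noteq> {}"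
  have max: "\<exists>m\<in>T \<inter> A. \<forall>x\<in>T \<inter> A. mon_le x m" if "well_based A" "T \<inter> A \<noteq> {}" for A
    using that unfolding well_based_iff_has_max by blast
  show "\<exists>m\<in>T. \<forall>x\<in>T. mon_le x m"
  proof (cases "T \<inter> S = {} \<or> T \<inter> S' = {}")
    case True
    then show ?thesis using max[OF assms(1)] max[OF assms(2)] T by blast
  next
    case False
    then obtain a b where ab: "a \<in> T" "\<forall>x\<in>T \<inter> S. mon_le x a" "b \<in> T" "\<forall>x\<in>T \<inter> S'. mon_le x b"
      using max[OF assms(1)] max[OF assms(2)] by blast
    show ?thesis
    proof (intro bexI ballI)
      show "mon.max a b \<in> T"
        using ab by (simp add: mon.max_def)
      show "mon_le x (mon.max a b)" if "x \<in> T" for x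
        using that T(1) ab by (auto simp only: mon.le_max_iff_disj Un_iff Int_iff subset_iff)
    qed
  qed
qed

lemma well_based_insert: "well_based S \<Longrightarrow> well_based (insert x S)"
  using well_based_Un[of "{x}" S] by (simp add: well_based_iff_has_max subset_singleton_iff)

lemma well_based_image_mult:
  assumes "well_based S"
  shows "well_based (mon_mult t ` S)"
  unfolding well_based_iff_has_max
proof (intro allI impI)
  fix T assume T: "T \<subseteq> mon_mult t ` S" "T \<noteq> {}"
  have "mon_mult (minv t) ` T \<subseteq> S"
    using T(1) by (auto simp only: mon.minus_add_cancel)
  then have "\<exists>m'\<in>mon_mult (minv t) ` T. \<forall>x'\<in>mon_mult (minv t) ` T. mon_le x' m'"
    using assms T(2) unfolding well_based_iff_has_max by blast
  then obtain m where "m \<in> T" "\<forall>x\<in>T. mon_le (mon_mult (minv t) x) (mon_mult (minv t) m)"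
    by blast
  then show "\<exists>m\<in>T. \<forall>x\<in>T. mon_le x m"
    by (simp only: mon.add_le_cancel_left) blast
qed

lemma well_based_image_antimono:
  fixes \<phi> :: "'a::wellorder \<Rightarrow> 'o::wellorder mon"
  assumes "\<And>a b. a \<le> b \<Longrightarrow> mon_le (\<phi> b) (\<phi> a)"
  shows "well_based (\<phi> ` A)"
  unfolding well_based_iff_has_max
proof (intro allI impI)
  fix T assume "T \<subseteq> \<phi> ` A" "T \<noteq> {}"
  then obtain a where "\<phi> a \<in> T" by blast
  define a0 where "a0 = (LEAST a. \<phi> a \<in> T)"
  have "\<phi> a0 \<in> T"
    unfolding a0_def by (rule LeastI) fact
  moreover have "mon_le x (\<phi> a0)" if x: "x \<in> T" for x
  proof -
    obtain a where "x = \<phi> a"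
      using \<open>T \<subseteq> \<phi> ` A\<close> x by blast
    with x have "a0 \<le> a"
      unfolding a0_def by (simp add: Least_le)
    with \<open>x = \<phi> a\<close> show ?thesis by (simp add: assms)
  qed
  ultimately show "\<exists>m\<in>T. \<forall>x\<in>T. mon_le x m" by blast
qed

lemma well_based_ell_image: "well_based (ell ` A)"
  by (rule well_based_image_antimono) (rule ell_antimono)

lemma mon_decseq_less:
  assumes "\<And>k. mon_less (l (Suc k)) (l k)" "i < j"
  shows "mon_less (l j) (l i)"
  using assms(2) by (induction j) (auto simp: less_Suc_eq intro: mon.less_trans assms(1))

lemma mon_decseq_inj:
  assumes "\<And>k. mon_less (l (Suc k)) (l k)"
  shows "inj l"
proof (rule injI)
  fix i j assume "l i = l j"
  then show "i = j"
    using assms mon_decseq_less[of l i j] mon_decseq_less[of l j i]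
    by (cases i j rule: linorder_cases) auto
qed

lemma well_based_range_decseq: "(\<And>k. mon_less (l (Suc k)) (l k)) \<Longrightarrow> well_based (range l)"
  by (rule well_based_image_antimono) (metis mon.lift_Suc_antimono_le mon.less_imp_le)

lemma well_based_nonincreasing_subseq:
  fixes s :: "nat \<Rightarrow> 'o::wellorder mon"
  assumes wb: "well_based S" and s: "\<And>i. s i \<in> S"
  obtains \<phi> where "strict_mono \<phi>" "\<And>j. mon_le (s (\<phi> (Suc j))) (s (\<phi> j))"
proof -
  define M where "M = {i. \<forall>j>i. mon_le (s j) (s i)}"
  have "\<exists>i\<in>M. n \<le> i" for n
  proof -
    have "s ` {n..} \<subseteq> S" "s ` {n..} \<noteq> {}"
      using s by auto
    then obtain m where m: "m \<in> s ` {n..}" "\<forall>x\<in>s ` {n..}. mon_le x m"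
      using wb unfolding well_based_iff_has_max by meson
    then obtain i where "i \<ge> n" "m = s i"
      by auto
    with m(2) have "i \<in> M"
      unfolding M_def by auto
    with \<open>i \<ge> n\<close> show ?thesis by blast
  qed
  then have inf: "infinite M"
    using infinite_nat_iff_unbounded_le[of M] by blast
  have sm: "strict_mono (enumerate M)"
    using enumerate_mono[OF _ inf] by (rule strict_monoI)
  have "mon_le (s (enumerate M (Suc j))) (s (enumerate M j))" for j
    using enumerate_in_set[OF inf, of j] strict_monoD[OF sm, of j "Suc j"] unfolding M_def by blast
  with sm show ?thesis by (rule that)
qed

section \<open>Generated submonoids and Neumann's lemma\<close>

definition gen_monoid :: "'o::wellorder mon set \<Rightarrow> 'o mon set" where
  "gen_monoid S = {mon.sum_list xs | xs. set xs \<subseteq> S}"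

definition gen_semigroup :: "'o::wellorder mon set \<Rightarrow> 'o mon set" where
  "gen_semigroup S = {mon_mult s y | s y. s \<in> S \<and> y \<in> gen_monoid S}"

lemma one_in_gen_monoid [simp]: "mon_one \<in> gen_monoid S"
  unfolding gen_monoid_def by (auto intro!: exI[of _ "[]"])

lemma gen_monoid_induct [consumes 1, case_names one mult]:
  assumes "x \<in> gen_monoid S"
    and "P mon_one"
    and "\<And>s y. s \<in> S \<Longrightarrow> y \<in> gen_monoid S \<Longrightarrow> P y \<Longrightarrow> P (mon_mult s y)"
  shows "P x"
proof -
  obtain xs where "set xs \<subseteq> S" "x = mon.sum_list xs"
    using assms(1) unfolding gen_monoid_def by blast
  moreover have "set xs \<subseteq> S \<Longrightarrow> mon.sum_list xs \<in> gen_monoid S \<and> P (mon.sum_list xs)"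
  proof (induction xs)
    case Nil
    show ?case using assms(2) by simp
  next
    case (Cons s xs)
    then have "s \<in> S" "mon.sum_list xs \<in> gen_monoid S" "P (mon.sum_list xs)"
      by auto
    moreover have "mon.sum_list (s # xs) \<in> gen_monoid S"
      using Cons.prems unfolding gen_monoid_def by blast
    ultimately show ?case
      using assms(3) by simp
  qed
  ultimately show ?thesis by blast
qed

lemma gen_monoid_mult:
  assumes "x \<in> gen_monoid S" "y \<in> gen_monoid S"
  shows "mon_mult x y \<in> gen_monoid S"
proof -
  obtain xs ys where "set xs \<subseteq> S" "set ys \<subseteq> S" "x = mon.sum_list xs" "y = mon.sum_list ys"
    using assms unfolding gen_monoid_def by blast
  then have "mon_mult x y = mon.sum_list (xs @ ys)" "set (xs @ ys) \<subseteq> S"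
    by simp_all
  then show ?thesis
    unfolding gen_monoid_def by blast
qed

lemma subset_gen_monoid: "S \<subseteq> gen_monoid S"
proof
  fix s assume "s \<in> S"
  then have "s = mon.sum_list [s]" "set [s] \<subseteq> S" by simp_all
  then show "s \<in> gen_monoid S"
    unfolding gen_monoid_def by blast
qed

lemma gen_monoid_subset_gen_monoid: "X \<subseteq> gen_monoid T \<Longrightarrow> gen_monoid X \<subseteq> gen_monoid T"
proof
  fix x assume "X \<subseteq> gen_monoid T" "x \<in> gen_monoid X"
  then show "x \<in> gen_monoid T"
    by (induction rule: gen_monoid_induct[OF \<open>x \<in> gen_monoid X\<close>]) (auto intro: gen_monoid_mult)
qed

lemma gen_semigroup_subset: "gen_semigroup S \<subseteq> gen_monoid S"
  unfolding gen_semigroup_def using subset_gen_monoid gen_monoid_mult by blast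

lemma gen_monoid_nonpos:
  assumes "\<forall>s\<in>S. mon_less s mon_one" "x \<in> gen_monoid S"
  shows "mon_le x mon_one"
  using assms(2) by (induction rule: gen_monoid_induct) (use assms(1) in \<open>auto intro: mon.add_neg_nonpos mon.less_imp_le\<close>)

lemma gen_semigroup_neg:
  assumes neg: "\<forall>s\<in>S. mon_less s mon_one" and x: "x \<in> gen_semigroup S"
  shows "mon_less x mon_one"
proof -
  obtain s y where "x = mon_mult s y" "s \<in> S" "y \<in> gen_monoid S"
    using x unfolding gen_semigroup_def by blast
  then show ?thesis
    using neg mon.add_neg_nonpos[of s y] gen_monoid_nonpos[OF neg, of y] by simp
qed

lemma gen_monoid_mons_below:
  assumes "S \<subseteq> mons_below \<alpha>"
  shows "gen_monoid S \<subseteq> mons_below \<alpha>"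
proof
  fix x assume "x \<in> gen_monoid S"
  then show "x \<in> mons_below \<alpha>"
    by (induction rule: gen_monoid_induct) (use assms in \<open>auto intro: mons_below_one mons_below_mult\<close>)
qed

lemma gen_semigroup_subset_coset:
  assumes p: "p \<in> gen_monoid T" and X: "X \<subseteq> mon_mult p ` gen_monoid T"
  shows "gen_semigroup X \<subseteq> mon_mult p ` gen_monoid T"
proof
  fix x assume "x \<in> gen_semigroup X"
  then obtain s y where x: "x = mon_mult s y" "s \<in> X" "y \<in> gen_monoid X"
    unfolding gen_semigroup_def by blast
  then obtain h where h: "s = mon_mult p h" "h \<in> gen_monoid T"
    using X by blast
  have "X \<subseteq> gen_monoid T"
  proof
    fix z assume "z \<in> X"
    then obtain h' where "z = mon_mult p h'" "h' \<in> gen_monoid T"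
      using X by blast
    then show "z \<in> gen_monoid T"
      using p by (simp add: gen_monoid_mult)
  qed
  then have "y \<in> gen_monoid T"
    using x(3) gen_monoid_subset_gen_monoid by blast
  with h have "mon_mult h y \<in> gen_monoid T"
    by (simp add: gen_monoid_mult)
  moreover have "x = mon_mult p (mon_mult h y)"
    using x(1) h(1) by (simp add: mon.add.assoc)
  ultimately show "x \<in> mon_mult p ` gen_monoid T"
    by blast
qed

definition gen_length :: "'o::wellorder mon set \<Rightarrow> 'o mon \<Rightarrow> nat" where
  "gen_length S x = (LEAST n. \<exists>xs. length xs = n \<and> set xs \<subseteq> S \<and> mon.sum_list xs = x)"

lemma gen_monoid_split_factor:
  assumes "x \<in> gen_monoid S" "x \<noteq> mon_one"
  shows "\<exists>s y. s \<in> S \<and> y \<in> gen_monoid S \<and> x = mon_mult s y \<and> gen_length S y < gen_length S x"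
proof -
  have "\<exists>xs. length xs = gen_length S x \<and> set xs \<subseteq> S \<and> mon.sum_list xs = x"
    unfolding gen_length_def by (rule LeastI_ex) (use assms(1) in \<open>auto simp: gen_monoid_def\<close>)
  then obtain xs where xs: "length xs = gen_length S x" "set xs \<subseteq> S" "mon.sum_list xs = x"
    by blast
  with assms(2) obtain s ys where "xs = s # ys"
    by (cases xs) auto
  moreover have "gen_length S (mon.sum_list ys) \<le> length ys"
    unfolding gen_length_def by (rule Least_le) (use xs \<open>xs = s # ys\<close> in auto)
  ultimately show ?thesis
    using xs by (intro exI[of _ s] exI[of _ "mon.sum_list ys"]) (auto simp: gen_monoid_def)
qed

lemma minimal_ascending_sequence:
  fixes N :: "'a \<Rightarrow> nat"
  assumes step: "\<And>x. x \<in> B \<Longrightarrow> \<exists>y\<in>B. R x y" and "b \<in> B"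
  obtains x where "\<And>i. x i \<in> B" "\<And>i. R (x i) (x (Suc i))"
    "\<And>z. z \<in> B \<Longrightarrow> N (x 0) \<le> N z"
    "\<And>i z. z \<in> B \<Longrightarrow> R (x i) z \<Longrightarrow> N (x (Suc i)) \<le> N z"
proof -
  define x where "x = rec_nat (ARG_MIN N z. z \<in> B) (\<lambda>_ xi. ARG_MIN N z. z \<in> B \<and> R xi z)"
  have x0: "x 0 \<in> B \<and> (\<forall>z. z \<in> B \<longrightarrow> N (x 0) \<le> N z)"
    unfolding x_def using arg_min_nat_lemma[of "\<lambda>z. z \<in> B" b N] assms(2) by simp
  have xS: "x (Suc i) \<in> B \<and> R (x i) (x (Suc i)) \<and> (\<forall>z. z \<in> B \<and> R (x i) z \<longrightarrow> N (x (Suc i)) \<le> N z)"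
    if xi: "x i \<in> B" for i
  proof -
    obtain y where "y \<in> B" "R (x i) y"
      using step[OF xi] by blast
    then show ?thesis
      using arg_min_nat_lemma[of "\<lambda>z. z \<in> B \<and> R (x i) z" y N] by (simp add: x_def)
  qed
  have xB: "x i \<in> B" for i
    by (induction i) (use x0 xS in auto)
  show ?thesis
    by (rule that) (use x0 xS xB in auto)
qed

lemma gen_monoid_ascending_split:
  assumes neg: "\<forall>s\<in>S. mon_less s mon_one"
    and x: "\<And>i. x i \<in> gen_monoid S" "\<And>i. mon_less (x i) (x (Suc i))"
  obtains s y where "\<And>i. s i \<in> S" "\<And>i. y i \<in> gen_monoid S" "\<And>i. x i = mon_mult (s i) (y i)"
    "\<And>i. gen_length S (y i) < gen_length S (x i)"
proof -
  have "x i \<noteq> mon_one" for i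
  proof
    assume "x i = mon_one"
    with x(2)[of i] gen_monoid_nonpos[OF neg x(1)[of "Suc i"]] show False
      by (simp add: mon.not_less[symmetric])
  qed
  then have "\<forall>i. \<exists>s y. s \<in> S \<and> y \<in> gen_monoid S \<and> x i = mon_mult s y \<and> gen_length S y < gen_length S (x i)"
    using gen_monoid_split_factor[OF x(1)] by blast
  then obtain s where "\<forall>i. \<exists>y. s i \<in> S \<and> y \<in> gen_monoid S \<and> x i = mon_mult (s i) y \<and> gen_length S y < gen_length S (x i)"
    by (rule choice[THEN exE])
  then obtain y where "\<forall>i. s i \<in> S \<and> y i \<in> gen_monoid S \<and> x i = mon_mult (s i) (y i) \<and> gen_length S (y i) < gen_length S (x i)"
    by (rule choice[THEN exE])
  then show ?thesis
    using that by blast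
qed

lemma ascending_remainders:
  assumes x: "\<And>i. mon_less (x i) (x (Suc i))" and xsy: "\<And>i. x i = mon_mult (s i) (y i)"
    and \<phi>: "strict_mono \<phi>" "\<And>j. mon_le (s (\<phi> (Suc j))) (s (\<phi> j))"
  shows "mon_less (y (\<phi> j)) (y (\<phi> (Suc j)))"
proof (rule ccontr)
  assume "\<not> ?thesis"
  then have "mon_le (x (\<phi> (Suc j))) (x (\<phi> j))"
    unfolding xsy using \<phi>(2) by (simp add: mon.not_less mon.add_mono)
  moreover have "mon_less (x (\<phi> j)) (x (\<phi> (Suc j)))"
    using mon.lift_Suc_mono_less[of x, OF x] \<phi>(1) by (simp add: strict_mono_def)
  ultimately show False by simp
qed

definition ascending_starts :: "'o::wellorder mon set \<Rightarrow> 'o mon set" where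
  "ascending_starts G = {h 0 | h. \<forall>n. h n \<in> G \<and> mon_less (h n) (h (Suc n))}"

lemma ascending_starts_empty_iff: "ascending_starts G = {} \<longleftrightarrow> well_based G"
  unfolding ascending_starts_def well_based_def by blast

lemma ascending_startsI:
  "(\<And>n. h n \<in> G) \<Longrightarrow> (\<And>n. mon_less (h n) (h (Suc n))) \<Longrightarrow> h 0 \<in> ascending_starts G"
  unfolding ascending_starts_def by blast

lemma ascending_starts_subset: "ascending_starts G \<subseteq> G"
  unfolding ascending_starts_def by auto

lemma ascending_starts_step:
  assumes "x \<in> ascending_starts G"
  shows "\<exists>y\<in>ascending_starts G. mon_less x y"
proof -
  obtain h where h: "x = h 0" "\<forall>n. h n \<in> G \<and> mon_less (h n) (h (Suc n))"
    using assms unfolding ascending_starts_def by blast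
  then have "h (Suc 0) \<in> ascending_starts G"
    using ascending_startsI[of "\<lambda>n. h (Suc n)"] by simp
  with h show ?thesis by blast
qed

(* Neumann's lemma, by a minimal bad sequence argument: split off a factor from S at every step
   of a minimal ascending sequence; along a subsequence on which these factors do not increase,
   the remainders ascend again, and the first of them is shorter than the element it came from. *)

lemma well_based_gen_monoid:
  assumes wb: "well_based S" and neg: "\<forall>s\<in>S. mon_less s mon_one"
  shows "well_based (gen_monoid S)"
proof (rule ccontr)
  let ?B = "ascending_starts (gen_monoid S)"
  assume "\<not> well_based (gen_monoid S)"
  then obtain b where "b \<in> ?B"
    using ascending_starts_empty_iff by blast
  obtain x where xB: "\<And>i. x i \<in> ?B" and x_asc: "\<And>i. mon_less (x i) (x (Suc i))"
    and x_min0: "\<And>z. z \<in> ?B \<Longrightarrow> gen_length S (x 0) \<le> gen_length S z"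
    and x_minS: "\<And>i z. z \<in> ?B \<Longrightarrow> mon_less (x i) z \<Longrightarrow> gen_length S (x (Suc i)) \<le> gen_length S z"
    using minimal_ascending_sequence[where R = mon_less and N = "gen_length S",
        OF ascending_starts_step \<open>b \<in> ?B\<close>] by blast
  have "x i \<in> gen_monoid S" for i
    using xB ascending_starts_subset by blast
  then obtain s y where s: "\<And>i. s i \<in> S" and y: "\<And>i. y i \<in> gen_monoid S"
    and xsy: "\<And>i. x i = mon_mult (s i) (y i)" and shorter: "\<And>i. gen_length S (y i) < gen_length S (x i)"
    using gen_monoid_ascending_split[of S x, OF neg _ x_asc] by blast
  obtain \<phi> where \<phi>: "strict_mono \<phi>" "\<And>j. mon_le (s (\<phi> (Suc j))) (s (\<phi> j))"
    using well_based_nonincreasing_subseq[of S s, OF wb s] by blast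
  have yB: "y (\<phi> 0) \<in> ?B"
    using ascending_startsI[of "\<lambda>j. y (\<phi> j)"] y ascending_remainders[OF x_asc xsy \<phi>] by simp
  have "gen_length S (x (\<phi> 0)) \<le> gen_length S (y (\<phi> 0))"
  proof (cases "\<phi> 0")
    case 0
    then show ?thesis using x_min0[OF yB] by simp
  next
    case (Suc i)
    have "mon_less (x (\<phi> 0)) (y (\<phi> 0))"
      using xsy[of "\<phi> 0"] s[of "\<phi> 0"] neg mon.add_strict_right_mono[of "s (\<phi> 0)" mon_one "y (\<phi> 0)"]
      by simp
    then have "mon_less (x i) (y (\<phi> 0))"
      using x_asc[of i] Suc by (metis mon.less_trans)
    then show ?thesis
      using x_minS[OF yB] Suc by simp
  qed
  then show False
    using shorter[of "\<phi> 0"] by simp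
qed

lemma supp_ser_mult: "supp (ser_mult f g) \<subseteq> {mon_mult a b | a b. a \<in> supp f \<and> b \<in> supp g}"
proof
  fix m assume m: "m \<in> supp (ser_mult f g)"
  show "m \<in> {mon_mult a b | a b. a \<in> supp f \<and> b \<in> supp g}"
  proof (rule ccontr)
    assume "m \<notin> {mon_mult a b | a b. a \<in> supp f \<and> b \<in> supp g}"
    then have "{p. fst p \<in> supp f \<and> snd p \<in> supp g \<and> mon_mult (fst p) (snd p) = m} = {}"
      by auto
    then have "ser_mult f g m = 0"
      by (simp only: ser_mult_def sum.empty)
    with m show False
      by (simp add: supp_def)
  qed
qed

lemma supp_ser_pow: "supp (ser_pow e n) \<subseteq> gen_monoid (supp e)"
proof (induction n)
  case 0
  show ?case by (auto simp: supp_def ser_const_def)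
next
  case (Suc n)
  show ?case
  proof
    fix m assume "m \<in> supp (ser_pow e (Suc n))"
    then obtain a b where "m = mon_mult a b" "a \<in> supp e" "b \<in> supp (ser_pow e n)"
      using supp_ser_mult[of e "ser_pow e n"] by auto
    then show "m \<in> gen_monoid (supp e)"
      using Suc subset_gen_monoid gen_monoid_mult by blast
  qed
qed

lemma supp_ser_pow_Suc: "supp (ser_pow e (Suc n)) \<subseteq> gen_semigroup (supp e)"
proof
  fix m assume "m \<in> supp (ser_pow e (Suc n))"
  then obtain a b where "m = mon_mult a b" "a \<in> supp e" "b \<in> supp (ser_pow e n)"
    using supp_ser_mult[of e "ser_pow e n"] by auto
  then show "m \<in> gen_semigroup (supp e)"
    using supp_ser_pow[of e n] unfolding gen_semigroup_def by blast
qed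

lemma supp_ser_scale: "supp (ser_scale c f) \<subseteq> supp f"
  by (auto simp: supp_def ser_scale_def)

lemma supp_sum_fam: "supp (sum_fam F I) \<subseteq> (\<Union>i\<in>I. supp (F i))"
proof
  fix m assume m: "m \<in> supp (sum_fam F I)"
  show "m \<in> (\<Union>i\<in>I. supp (F i))"
  proof (rule ccontr)
    assume "m \<notin> (\<Union>i\<in>I. supp (F i))"
    then have "{i \<in> I. m \<in> supp (F i)} = {}"
      by auto
    with m show False
      by (simp add: supp_def sum_fam_def)
  qed
qed

lemma dom_mon_eqI:
  assumes "m \<in> supp f" "\<forall>m'\<in>supp f. mon_le m' m"
  shows "dom_mon f = m"
  unfolding dom_mon_def mon_le_def[symmetric]
  using assms by (blast intro: the_equality mon.order.antisym)

lemma dom_mon_max: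
  assumes "well_based (supp f)" "supp f \<noteq> {}"
  shows "dom_mon f \<in> supp f" "\<forall>m\<in>supp f. mon_le m (dom_mon f)"
proof -
  obtain m where "m \<in> supp f" "\<forall>m'\<in>supp f. mon_le m' m"
    using assms unfolding well_based_iff_has_max by blast
  moreover from this have "dom_mon f = m"
    by (rule dom_mon_eqI)
  ultimately show "dom_mon f \<in> supp f" "\<forall>m\<in>supp f. mon_le m (dom_mon f)"
    by simp_all
qed

lemma ser_pos_dominated:
  assumes "f m > 0" "\<forall>m'\<in>supp f. mon_le m' m"
  shows "ser_pos f"
proof -
  have "m \<in> supp f" using assms(1) by (simp add: supp_def)
  with assms have "dom_mon f = m" by (simp add: dom_mon_eqI)
  with \<open>m \<in> supp f\<close> assms(1) show ?thesis
    unfolding ser_pos_def by auto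
qed

lemma less_ordsucc: "(\<beta>::'o::wellorder) < \<gamma> \<Longrightarrow> \<beta> < ordsucc \<beta>"
  unfolding ordsucc_def by (rule LeastI)

lemma ordsucc_le: "(\<beta>::'o::wellorder) < \<alpha> \<Longrightarrow> ordsucc \<beta> \<le> \<alpha>"
  unfolding ordsucc_def by (rule Least_le)

lemma ell_ordsucc_less: "(\<beta>::'o::wellorder) < \<alpha> \<Longrightarrow> mon_less (ell (ordsucc \<beta>)) (ell \<beta>)"
  by (intro ell_less_ell less_ordsucc)

lemma strict_mono_ordsucc:
  assumes "\<And>\<beta>::'o::wellorder. \<exists>\<gamma>. \<beta> < \<gamma>"
  shows "strict_mono (ordsucc :: 'o \<Rightarrow> 'o)"
proof (rule strict_monoI)
  fix a b :: 'o assume "a < b"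
  then have "ordsucc a \<le> b" by (rule ordsucc_le)
  also have "b < ordsucc b" using assms less_ordsucc by blast
  finally show "ordsucc a < ordsucc b" .
qed

section \<open>The logarithm\<close>

lemma log_mon_eq: "log_mon d m = (\<Sum>\<beta> | d \<beta> \<noteq> 0 \<and> m = ell (ordsucc \<beta>). d \<beta>)"
proof -
  have "{\<beta>. m \<in> supp (ser_scale (d \<beta>) (ser_monom (ell (ordsucc \<beta>))))} = {\<beta>. d \<beta> \<noteq> 0 \<and> m = ell (ordsucc \<beta>)}"
    by (auto simp: supp_def ser_scale_def ser_monom_def)
  then show ?thesis
    unfolding log_mon_def sum_fam_def by (auto simp: ser_scale_def ser_monom_def intro: sum.cong)
qed

lemma supp_log_mon: "supp (log_mon d) \<subseteq> (\<lambda>\<beta>. ell (ordsucc \<beta>)) ` {\<beta>. d \<beta> \<noteq> 0}"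
proof
  fix m assume m: "m \<in> supp (log_mon d)"
  show "m \<in> (\<lambda>\<beta>. ell (ordsucc \<beta>)) ` {\<beta>. d \<beta> \<noteq> 0}"
  proof (rule ccontr)
    assume "m \<notin> (\<lambda>\<beta>. ell (ordsucc \<beta>)) ` {\<beta>. d \<beta> \<noteq> 0}"
    then have "{\<beta>. d \<beta> \<noteq> 0 \<and> m = ell (ordsucc \<beta>)} = {}"
      by blast
    with m show False
      by (simp add: supp_def log_mon_eq)
  qed
qed

lemma log_mon_ell_ordsucc:
  assumes "\<And>\<beta>::'o::wellorder. \<exists>\<gamma>. \<beta> < \<gamma>"
  shows "log_mon d (ell (ordsucc \<beta>)) = d (\<beta>::'o)"
proof -
  have "{\<beta>'. d \<beta>' \<noteq> 0 \<and> ell (ordsucc \<beta>) = ell (ordsucc \<beta>')} = (if d \<beta> = 0 then {} else {\<beta>})"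
    using strict_mono_eq[OF strict_mono_ordsucc[OF assms]] by (auto simp: ell_inject)
  then show ?thesis
    by (simp add: log_mon_eq)
qed

lemma log_mon_ell: "log_mon (ell \<gamma>) m = (if m = ell (ordsucc \<gamma>) then 1 else 0)"
proof -
  have "{\<beta>. ell \<gamma> \<beta> \<noteq> 0 \<and> m = ell (ordsucc \<beta>)} = (if m = ell (ordsucc \<gamma>) then {\<gamma>} else {})"
    by (auto simp: ell_def)
  then show ?thesis
    by (simp add: log_mon_eq ell_def)
qed

(* The support of eps in f = c d(f) (1 + eps). *)

definition eps_supp :: "'o::wellorder ser \<Rightarrow> 'o mon set" where
  "eps_supp f = {m. m \<noteq> mon_one \<and> mon_mult m (dom_mon f) \<in> supp f}"

lemma eps_supp_subset: "eps_supp f \<subseteq> mon_mult (minv (dom_mon f)) ` supp f"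
proof
  fix e assume "e \<in> eps_supp f"
  then have "mon_mult e (dom_mon f) \<in> supp f"
    unfolding eps_supp_def by simp
  moreover have "e = mon_mult (minv (dom_mon f)) (mon_mult e (dom_mon f))"
    by (simp add: mon.add.commute)
  ultimately show "e \<in> mon_mult (minv (dom_mon f)) ` supp f"
    by blast
qed

lemma eps_supp_neg:
  assumes "\<forall>m\<in>supp f. mon_le m (dom_mon f)"
  shows "\<forall>e\<in>eps_supp f. mon_less e mon_one"
proof
  fix e assume "e \<in> eps_supp f"
  then have "e \<noteq> mon_one" "mon_le (mon_mult e (dom_mon f)) (mon_mult mon_one (dom_mon f))"
    using assms unfolding eps_supp_def by auto
  then show "mon_less e mon_one"
    by (simp add: mon.le_less)
qed

lemma well_based_eps_supp: "well_based (supp f) \<Longrightarrow> well_based (eps_supp f)"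
  using eps_supp_subset well_based_image_mult well_based_subset by blast

lemma eps_supp_mons_below:
  assumes "supp f \<subseteq> mons_below \<alpha>" "dom_mon f \<in> mons_below \<alpha>"
  shows "eps_supp f \<subseteq> mons_below \<alpha>"
proof
  fix e assume "e \<in> eps_supp f"
  then have "e \<in> mon_mult (minv (dom_mon f)) ` supp f"
    using eps_supp_subset by blast
  then obtain m where "e = mon_mult (minv (dom_mon f)) m" "m \<in> supp f"
    by (rule imageE)
  then show "e \<in> mons_below \<alpha>"
    using assms by (blast intro: mons_below_mult mons_below_minv)
qed

lemma well_based_supp_log_mon: "well_based (supp (log_mon d))"
proof -
  have "supp (log_mon d) \<subseteq> ell ` ordsucc ` {\<beta>. d \<beta> \<noteq> 0}"
    using supp_log_mon by (simp add: image_image)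
  then show ?thesis
    using well_based_ell_image well_based_subset by blast
qed

lemma supp_log_mon_mons_below:
  assumes "d \<in> mons_below \<alpha>0" "\<alpha>0 < \<alpha>"
  shows "supp (log_mon d) \<subseteq> mons_below \<alpha>"
proof
  fix m assume "m \<in> supp (log_mon d)"
  then have "m \<in> (\<lambda>\<beta>. ell (ordsucc \<beta>)) ` {\<beta>. d \<beta> \<noteq> 0}"
    using supp_log_mon by blast
  then obtain \<beta> where "m = ell (ordsucc \<beta>)" "\<beta> \<in> {\<beta>. d \<beta> \<noteq> 0}"
    by (rule imageE)
  moreover from this have "\<beta> < \<alpha>0"
    using assms(1) not_less by (auto simp: mons_below_def)
  ultimately show "m \<in> mons_below \<alpha>"
    using ordsucc_le[of \<beta> \<alpha>0] assms(2) mons_below_ell[of "ordsucc \<beta>" \<alpha>] by simp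
qed

lemma supp_log_mon_dominated:
  assumes unbounded: "\<And>\<beta>::'o::wellorder. \<exists>\<gamma>. \<beta> < \<gamma>" and "\<forall>\<gamma><\<beta>. d \<gamma> = 0"
  shows "\<forall>m\<in>supp (log_mon d). mon_le m (ell (ordsucc (\<beta>::'o)))"
proof
  fix m assume "m \<in> supp (log_mon d)"
  then have "m \<in> (\<lambda>\<beta>. ell (ordsucc \<beta>)) ` {\<beta>. d \<beta> \<noteq> 0}"
    using supp_log_mon by blast
  then obtain \<beta>' where "m = ell (ordsucc \<beta>')" "\<beta>' \<in> {\<beta>. d \<beta> \<noteq> 0}"
    by (rule imageE)
  moreover from this have "\<beta> \<le> \<beta>'"
    using assms(2) not_less by auto
  ultimately show "mon_le m (ell (ordsucc \<beta>))"
    using strict_mono_less_eq[OF strict_mono_ordsucc[OF unbounded]] ell_antimono[of "ordsucc \<beta>" "ordsucc \<beta>'"]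
    by simp
qed

lemma Llog_decompose:
  assumes c: "f (dom_mon f) \<noteq> 0"
  obtains S where
    "\<And>m. Llog f m = log_mon (dom_mon f) m + (if m = mon_one then ln (f (dom_mon f)) else 0) + S m"
    "supp S \<subseteq> gen_semigroup (eps_supp f)"
proof -
  define d where "d = dom_mon f"
  define eps where "eps = (\<lambda>m. f (mon_mult m d) / f d - (if m = mon_one then 1 else 0))"
  define S where "S = sum_fam (\<lambda>n. ser_scale ((-1) ^ (n - 1) / real n) (ser_pow eps n)) {1..}"
  have "supp eps = eps_supp f"
    using c by (auto simp: supp_def eps_supp_def eps_def d_def)
  have "supp S \<subseteq> gen_semigroup (eps_supp f)"
  proof
    fix m assume "m \<in> supp S"
    then obtain n where "n \<in> {1..}" "m \<in> supp (ser_pow eps n)"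
      unfolding S_def using supp_sum_fam supp_ser_scale by blast
    moreover from this obtain k where "n = Suc k"
      by (cases n) auto
    ultimately show "m \<in> gen_semigroup (eps_supp f)"
      using supp_ser_pow_Suc[of eps k] \<open>supp eps = eps_supp f\<close> by auto
  qed
  moreover have "Llog f m = log_mon d m + (if m = mon_one then ln (f d) else 0) + S m" for m
    by (simp add: Llog_def Let_def ser_add_def ser_const_def S_def eps_def d_def)
  ultimately show ?thesis
    using that unfolding d_def by blast
qed

lemma supp_Llog:
  assumes "f (dom_mon f) \<noteq> 0"
  shows "supp (Llog f) \<subseteq> supp (log_mon (dom_mon f)) \<union> insert mon_one (gen_semigroup (eps_supp f))"
proof -
  obtain S where L: "\<And>m. Llog f m = log_mon (dom_mon f) m + (if m = mon_one then ln (f (dom_mon f)) else 0) + S m"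
    and S: "supp S \<subseteq> gen_semigroup (eps_supp f)"
    using Llog_decompose[of f, OF assms] by blast
  show ?thesis
    using S by (auto simp: supp_def L)
qed

lemma Llog_apply_not_less_one:
  assumes "f (dom_mon f) \<noteq> 0" "\<forall>m\<in>supp f. mon_le m (dom_mon f)" "\<not> mon_less m mon_one"
  shows "Llog f m = log_mon (dom_mon f) m + (if m = mon_one then ln (f (dom_mon f)) else 0)"
proof -
  obtain S where L: "\<And>m. Llog f m = log_mon (dom_mon f) m + (if m = mon_one then ln (f (dom_mon f)) else 0) + S m"
    and S: "supp S \<subseteq> gen_semigroup (eps_supp f)"
    using Llog_decompose[of f, OF assms(1)] by blast
  have "m \<notin> gen_semigroup (eps_supp f)"
    using gen_semigroup_neg eps_supp_neg[OF assms(2)] assms(3) by blast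
  with S have "S m = 0"
    by (auto simp: supp_def)
  then show ?thesis
    by (simp add: L)
qed

lemma Llog_in_Lbelow:
  assumes g: "g \<in> Lbelow \<alpha>0" and ne: "supp g \<noteq> {}" and "\<alpha>0 < \<alpha>"
  shows "Llog g \<in> Lbelow \<alpha>"
proof -
  let ?S = "supp (log_mon (dom_mon g)) \<union> insert mon_one (gen_semigroup (eps_supp g))"
  have wb: "well_based (supp g)" and "supp g \<subseteq> mons_below \<alpha>0"
    using g by (auto simp: Lbelow_def)
  then have below: "supp g \<subseteq> mons_below \<alpha>"
    using mons_below_mono[of \<alpha>0 \<alpha>] \<open>\<alpha>0 < \<alpha>\<close> by (meson less_imp_le subset_trans)
  note d = dom_mon_max[OF wb ne]
  have "well_based (gen_monoid (eps_supp g))"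
    using well_based_gen_monoid well_based_eps_supp[OF wb] eps_supp_neg d(2) by blast
  then have "well_based ?S"
    using gen_semigroup_subset well_based_supp_log_mon
    by (intro well_based_Un well_based_insert) (auto intro: well_based_subset)
  moreover have "gen_semigroup (eps_supp g) \<subseteq> mons_below \<alpha>"
    using eps_supp_mons_below[OF below] d(1) below gen_monoid_mons_below gen_semigroup_subset by blast
  then have "?S \<subseteq> mons_below \<alpha>"
    using supp_log_mon_mons_below d(1) \<open>supp g \<subseteq> mons_below \<alpha>0\<close> \<open>\<alpha>0 < \<alpha>\<close> mons_below_one by blast
  moreover have "supp (Llog g) \<subseteq> ?S"
    using supp_Llog d(1) by (simp add: supp_def)
  ultimately show ?thesis
    unfolding Lbelow_def using well_based_subset by blast
qed

lemma pos_infiniteD: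
  assumes wb: "well_based (supp g)" and inf: "pos_infinite g"
  shows "ser_pos g" and "mon_less mon_one (dom_mon g)"
proof -
  have "(\<lambda>m. g m - ser_const 0 m) = g"
    by (auto simp: ser_const_def)
  then show pos: "ser_pos g"
    using inf unfolding pos_infinite_def ser_less_def by metis
  show "mon_less mon_one (dom_mon g)"
  proof (rule ccontr)
    assume "\<not> ?thesis"
    then have le: "mon_le (dom_mon g) mon_one"
      by (simp add: mon.not_less)
    define h where "h = (\<lambda>m. g m - ser_const (g mon_one + 1) m)"
    have "h mon_one = -1"
      by (simp add: h_def ser_const_def)
    moreover have "\<forall>m\<in>supp h. mon_le m mon_one"
    proof
      fix m assume "m \<in> supp h"
      then have "m = mon_one \<or> m \<in> supp g"
        by (auto simp: h_def supp_def ser_const_def split: if_splits)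
      then show "mon_le m mon_one"
        using dom_mon_max(2)[OF wb] pos le unfolding ser_pos_def by (auto intro: mon.order.trans)
    qed
    ultimately have "dom_mon h = mon_one"
      by (intro dom_mon_eqI) (auto simp: supp_def)
    moreover have "ser_pos h"
      using inf unfolding pos_infinite_def ser_less_def h_def by blast
    ultimately show False
      using \<open>h mon_one = -1\<close> unfolding ser_pos_def by simp
  qed
qed

lemma Llog_infinite_ell_dominant:
  fixes g :: "'o::wellorder ser"
  assumes unbounded: "\<And>\<beta>::'o. \<exists>\<gamma>. \<beta> < \<gamma>"
    and wb: "well_based (supp g)" and ne: "supp g \<noteq> {}"
    and inf: "mon_less mon_one (dom_mon g)"
  obtains \<gamma> where "Llog g (ell \<gamma>) > 0" "\<forall>m\<in>supp (Llog g). mon_le m (ell \<gamma>)"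
proof -
  define d where "d = dom_mon g"
  have d: "d \<in> supp g" "\<forall>m\<in>supp g. mon_le m d"
    using dom_mon_max[OF wb ne] unfolding d_def by simp_all
  then have "g (dom_mon g) \<noteq> 0"
    by (simp add: supp_def d_def)
  obtain \<beta> where \<beta>: "0 < d \<beta>" "\<forall>\<gamma><\<beta>. d \<gamma> = 0"
    using inf unfolding d_def mon_less_iff mon_one_def by auto
  show ?thesis
  proof (rule that[of "ordsucc \<beta>"])
    have "\<not> mon_less (ell (ordsucc \<beta>)) mon_one" "ell (ordsucc \<beta>) \<noteq> mon_one"
      using one_less_ell[of "ordsucc \<beta>"] by auto
    then show "Llog g (ell (ordsucc \<beta>)) > 0"
      using Llog_apply_not_less_one[of g, OF \<open>g (dom_mon g) \<noteq> 0\<close>] d(2) \<beta>(1) log_mon_ell_ordsucc[OF unbounded]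
      unfolding d_def by simp
    have "mon_le m (ell (ordsucc \<beta>))" if "m \<in> insert mon_one (gen_semigroup (eps_supp g))" for m
      using that gen_semigroup_neg[OF eps_supp_neg] d(2) one_less_ell unfolding d_def
      by (metis insert_iff mon.less_imp_le mon.less_trans)
    then show "\<forall>m\<in>supp (Llog g). mon_le m (ell (ordsucc \<beta>))"
      using supp_Llog[of g, OF \<open>g (dom_mon g) \<noteq> 0\<close>] supp_log_mon_dominated[OF unbounded \<beta>(2)]
      unfolding d_def by blast
  qed
qed

lemma Llog_ell_dominant:
  fixes f :: "'o::wellorder ser"
  assumes pos: "f (ell \<gamma>) > 0" and dominated: "\<forall>m\<in>supp f. mon_le m (ell \<gamma>)"
  shows "supp (Llog f) \<subseteq> insert (ell (ordsucc \<gamma>)) (insert mon_one (gen_semigroup (eps_supp f)))"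
    and "Llog f (ell (ordsucc \<gamma>)) = 1"
    and "Llog f mon_one = ln (f (ell \<gamma>))"
proof -
  have "dom_mon f = ell \<gamma>"
    using pos dominated by (intro dom_mon_eqI) (simp_all add: supp_def)
  then have c: "f (dom_mon f) \<noteq> 0" and L: "\<And>m. \<not> mon_less m mon_one \<Longrightarrow>
      Llog f m = log_mon (ell \<gamma>) m + (if m = mon_one then ln (f (ell \<gamma>)) else 0)"
    using pos dominated Llog_apply_not_less_one[of f] by auto
  have "\<not> mon_less (ell (ordsucc \<gamma>)) mon_one" "ell (ordsucc \<gamma>) \<noteq> mon_one"
    using one_less_ell[of "ordsucc \<gamma>"] by auto
  then show "Llog f (ell (ordsucc \<gamma>)) = 1" "Llog f mon_one = ln (f (ell \<gamma>))"
    by (simp_all add: L log_mon_ell)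
  show "supp (Llog f) \<subseteq> insert (ell (ordsucc \<gamma>)) (insert mon_one (gen_semigroup (eps_supp f)))"
    using supp_Llog[of f, OF c] \<open>dom_mon f = ell \<gamma>\<close> by (auto simp: supp_def log_mon_ell)
qed

lemma Llog_coset_step:
  fixes f :: "'o::wellorder ser"
  assumes T: "\<forall>t\<in>T. mon_less t mon_one"
    and p: "p \<in> gen_monoid T" "mon_div p (ell \<gamma>) \<in> gen_monoid T"
    and f: "f (ell \<gamma>) = 1" "supp f \<subseteq> insert (ell \<gamma>) (mon_mult p ` gen_monoid T)"
  shows "Llog f (ell (ordsucc \<gamma>)) = 1"
    and "supp (Llog f) \<subseteq> insert (ell (ordsucc \<gamma>)) (mon_mult (mon_div p (ell \<gamma>)) ` gen_monoid T)"
proof -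
  have below_ell: "mon_less (mon_mult p h) (ell \<gamma>)" if "h \<in> gen_monoid T" for h
    using gen_monoid_nonpos[OF T p(1)] gen_monoid_nonpos[OF T that] one_less_ell
    by (metis mon.add_nonpos_nonpos mon.le_less_trans)
  have dominated: "\<forall>m\<in>supp f. mon_le m (ell \<gamma>)"
    using f(2) below_ell mon.less_imp_le by blast
  have pos: "f (ell \<gamma>) > 0"
    using f(1) by simp
  have "dom_mon f = ell \<gamma>"
    using pos dominated by (intro dom_mon_eqI) (simp_all add: supp_def)
  have "eps_supp f \<subseteq> mon_mult (mon_div p (ell \<gamma>)) ` gen_monoid T"
  proof
    fix e assume "e \<in> eps_supp f"
    then have "e \<noteq> mon_one" "mon_mult e (ell \<gamma>) \<in> supp f"
      unfolding eps_supp_def \<open>dom_mon f = ell \<gamma>\<close> by simp_all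
    moreover from this have "mon_mult e (ell \<gamma>) \<noteq> ell \<gamma>"
      by (metis mon.add.left_neutral mon.add_right_cancel)
    ultimately have "mon_mult e (ell \<gamma>) \<in> mon_mult p ` gen_monoid T"
      using f(2) by blast
    then obtain h where "mon_mult e (ell \<gamma>) = mon_mult p h" "h \<in> gen_monoid T"
      by (rule imageE) simp
    moreover from this have "e = mon_mult (mon_div p (ell \<gamma>)) h"
      by (metis mon.add_diff_cancel mon.diff_add_eq)
    ultimately show "e \<in> mon_mult (mon_div p (ell \<gamma>)) ` gen_monoid T"
      by blast
  qed
  then have "gen_semigroup (eps_supp f) \<subseteq> mon_mult (mon_div p (ell \<gamma>)) ` gen_monoid T"
    using gen_semigroup_subset_coset p(2) by blast
  moreover have "Llog f mon_one = 0"
    using Llog_ell_dominant(3)[OF pos dominated] f(1) by simp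
  ultimately show "supp (Llog f) \<subseteq> insert (ell (ordsucc \<gamma>)) (mon_mult (mon_div p (ell \<gamma>)) ` gen_monoid T)"
    using Llog_ell_dominant(1)[OF pos dominated] by (auto simp: supp_def)
  show "Llog f (ell (ordsucc \<gamma>)) = 1"
    by (rule Llog_ell_dominant(2)[OF pos dominated])
qed

section \<open>Summable families\<close>

lemma finite_coset_indices:
  fixes p :: "nat \<Rightarrow> 'o::wellorder mon"
  assumes H: "well_based H" and p: "\<And>k. mon_less (p (Suc k)) (p k)"
  shows "finite {k. m \<in> mon_mult (p k) ` H}"
proof (cases "{k. m \<in> mon_mult (p k) ` H} = {}")
  case False
  define K where "K = {k. m \<in> mon_mult (p k) ` H}"
  have "(\<lambda>k. mon_div m (p k)) ` K \<subseteq> H"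
  proof
    fix x assume "x \<in> (\<lambda>k. mon_div m (p k)) ` K"
    then obtain k where "x = mon_div m (p k)" "k \<in> K"
      by (rule imageE)
    moreover from this obtain h where "m = mon_mult (p k) h" "h \<in> H"
      unfolding K_def by (auto elim: imageE)
    ultimately show "x \<in> H" by simp
  qed
  with H False have "\<exists>x\<in>(\<lambda>k. mon_div m (p k)) ` K. \<forall>y\<in>(\<lambda>k. mon_div m (p k)) ` K. mon_le y x"
    unfolding well_based_iff_has_max K_def by blast
  then obtain k0 where k0: "k0 \<in> K" "\<forall>k\<in>K. mon_le (mon_div m (p k)) (mon_div m (p k0))"
    by blast
  have "K \<subseteq> {..k0}"
  proof
    fix k assume "k \<in> K"
    show "k \<in> {..k0}"
    proof (rule ccontr)
      assume "k \<notin> {..k0}"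
      then have "mon_less (p k) (p k0)"
        by (intro mon_decseq_less[of p, OF p]) simp
      then have "mon_less (mon_div m (p k0)) (mon_div m (p k))"
        by (rule mon.diff_strict_left_mono)
      with k0(2) \<open>k \<in> K\<close> show False
        by (simp add: mon.not_less[symmetric])
    qed
  qed
  then show ?thesis
    unfolding K_def using finite_subset by blast
qed simp

lemma summable_fam_coset:
  fixes F :: "nat \<Rightarrow> 'o::wellorder ser"
  assumes supp: "\<And>k. supp (F k) \<subseteq> insert (l k) (mon_mult (p k) ` H)"
    and l: "\<And>k. mon_less (l (Suc k)) (l k)" and p: "\<And>k. mon_less (p (Suc k)) (p k)"
    and H: "well_based H" "\<And>k h. h \<in> H \<Longrightarrow> mon_mult (p k) h \<in> H"
    and F: "\<And>k. F k \<in> Lbelow \<alpha>"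
  shows "summable_fam F UNIV"
proof -
  have "(\<Union>k. supp (F k)) \<subseteq> range l \<union> H"
    using supp H(2) by blast
  then have "well_based (\<Union>k. supp (F k))"
    using well_based_Un[OF well_based_range_decseq[of l, OF l] H(1)] well_based_subset by blast
  moreover have "finite {k. m \<in> supp (F k)}" for m
  proof -
    have "{k. m \<in> supp (F k)} \<subseteq> l -` {m} \<union> {k. m \<in> mon_mult (p k) ` H}"
      using supp by blast
    moreover have "finite (l -` {m})"
      using finite_vimageI[OF _ mon_decseq_inj[of l, OF l]] by simp
    ultimately show ?thesis
      using finite_coset_indices[of H p, OF H(1) p] finite_subset by blast
  qed
  ultimately show ?thesis
    using F unfolding summable_fam_def by auto
qed

lemma summable_fam_Suc:
  assumes "summable_fam (\<lambda>n. F (Suc n)) UNIV" "F 0 \<in> Lser"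
  shows "summable_fam F UNIV"
proof -
  obtain \<alpha> \<beta> where \<alpha>: "\<And>n. F (Suc n) \<in> Lbelow \<alpha>" and \<beta>: "F 0 \<in> Lbelow \<beta>"
    using assms unfolding summable_fam_def Lser_def by blast
  have "F n \<in> Lbelow (max \<alpha> \<beta>)" for n
    using \<alpha> \<beta> Lbelow_mono[of \<alpha> "max \<alpha> \<beta>"] Lbelow_mono[of \<beta> "max \<alpha> \<beta>"] by (cases n) auto
  moreover have "(\<Union>n. supp (F n)) \<subseteq> supp (F 0) \<union> (\<Union>n. supp (F (Suc n)))"
  proof
    fix x assume "x \<in> (\<Union>n. supp (F n))"
    then obtain n where "x \<in> supp (F n)" by blast
    then show "x \<in> supp (F 0) \<union> (\<Union>n. supp (F (Suc n)))"
      by (cases n) auto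
  qed
  then have "well_based (\<Union>n. supp (F n))"
    using assms(1) \<beta> well_based_Un well_based_subset unfolding summable_fam_def Lbelow_def by blast
  moreover have "finite {n. m \<in> supp (F n)}" for m
  proof -
    have "{n. m \<in> supp (F n)} \<subseteq> insert 0 (Suc ` {n. m \<in> supp (F (Suc n))})"
    proof
      fix n assume "n \<in> {n. m \<in> supp (F n)}"
      then show "n \<in> insert 0 (Suc ` {n. m \<in> supp (F (Suc n))})"
        by (cases n) auto
    qed
    moreover have "finite {n. m \<in> supp (F (Suc n))}"
      using assms(1) unfolding summable_fam_def by simp
    ultimately show ?thesis
      using finite_subset by blast
  qed
  ultimately show ?thesis
    unfolding summable_fam_def by auto
qed

section \<open>Iterated logarithms\<close>

(* (l_(gamma+1) ... l_(gamma+k))^-1, where gamma+j is the j-th ordinal successor of gamma. *)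

primrec ell_inv_prod :: "'o::wellorder \<Rightarrow> nat \<Rightarrow> 'o mon" where
  "ell_inv_prod \<gamma> 0 = mon_one"
| "ell_inv_prod \<gamma> (Suc k) = mon_div (ell_inv_prod \<gamma> k) (ell ((ordsucc ^^ Suc k) \<gamma>))"

lemma ell_inv_prod_decreasing: "mon_less (ell_inv_prod \<gamma> (Suc k)) (ell_inv_prod \<gamma> k)"
  using one_less_ell[of "(ordsucc ^^ Suc k) \<gamma>"]
  by (simp add: mon.diff_less_eq mon.less_add_same_cancel1)

lemma ell_inv_prod_neg: "mon_less (ell_inv_prod \<gamma> (Suc k)) mon_one"
proof -
  have "mon_less (ell_inv_prod \<gamma> (Suc k)) (ell_inv_prod \<gamma> 0)"
    by (rule mon_decseq_less) (simp_all only: ell_inv_prod_decreasing)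
  then show ?thesis by simp
qed

lemma ell_inv_prod_mons_below:
  assumes "\<And>n. (ordsucc ^^ n) \<gamma> < \<alpha>"
  shows "ell_inv_prod \<gamma> k \<in> mons_below \<alpha>"
proof (induction k)
  case (Suc k)
  then show ?case
    using mons_below_ell[OF assms[of "Suc k"]] by (simp add: mons_below_div del: funpow.simps)
qed (simp add: mons_below_one)

lemma logn_Suc: "logn (Suc n) f = Llog (logn n f)"
  by (simp add: logn_def)

lemma logn_Suc_right: "logn (Suc n) f = logn n (Llog f)"
  by (simp add: logn_def funpow_swap1)

lemma logn_ell_dominant:
  fixes f :: "'o::wellorder ser"
  assumes pos: "f (ell \<gamma>) > 0" and dominated: "\<forall>m\<in>supp f. mon_le m (ell \<gamma>)"
    and T: "eps_supp f \<subseteq> T" "\<And>k. ell_inv_prod \<gamma> k \<in> gen_monoid T" "\<forall>t\<in>T. mon_less t mon_one"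
  shows "logn (Suc k) f (ell ((ordsucc ^^ Suc k) \<gamma>)) = 1 \<and>
    supp (logn (Suc k) f) \<subseteq> insert (ell ((ordsucc ^^ Suc k) \<gamma>)) (mon_mult (ell_inv_prod \<gamma> k) ` gen_monoid T)"
proof (induction k)
  case 0
  have "gen_semigroup (eps_supp f) \<subseteq> gen_monoid T"
    using T(1) subset_gen_monoid gen_semigroup_subset gen_monoid_subset_gen_monoid by (meson subset_trans)
  then have "supp (Llog f) \<subseteq> insert (ell (ordsucc \<gamma>)) (gen_monoid T)"
    using Llog_ell_dominant(1)[OF pos dominated] by auto
  moreover have "mon_mult (ell_inv_prod \<gamma> 0) ` gen_monoid T = gen_monoid T"
    by (simp add: image_def)
  ultimately show ?case
    using Llog_ell_dominant(2)[OF pos dominated] by (simp add: logn_def)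
next
  case (Suc k)
  define l where "l = (ordsucc ^^ Suc k) \<gamma>"
  have p: "mon_div (ell_inv_prod \<gamma> k) (ell l) \<in> gen_monoid T"
    using T(2)[of "Suc k"] by (simp add: l_def del: funpow.simps)
  note step = Llog_coset_step[OF T(3) T(2)[of k] p Suc.IH[folded l_def, THEN conjunct1]
      Suc.IH[folded l_def, THEN conjunct2]]
  have "(ordsucc ^^ Suc (Suc k)) \<gamma> = ordsucc l"
    by (simp add: l_def)
  moreover have "ell_inv_prod \<gamma> (Suc k) = mon_div (ell_inv_prod \<gamma> k) (ell l)"
    by (simp add: l_def del: funpow.simps)
  ultimately show ?case
    using step by (simp only: logn_Suc)
qed

definition iter_log_gens :: "'o::wellorder ser \<Rightarrow> 'o \<Rightarrow> 'o mon set" where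
  "iter_log_gens f \<gamma> = eps_supp f \<union> range (\<lambda>k. ell_inv_prod \<gamma> (Suc k))"

lemma ell_inv_prod_in_gen_monoid: "ell_inv_prod \<gamma> k \<in> gen_monoid (iter_log_gens f \<gamma>)"
  using subset_gen_monoid[of "iter_log_gens f \<gamma>"] unfolding iter_log_gens_def by (cases k) auto

lemma iter_log_gens_neg:
  assumes "f (ell \<gamma>) > 0" "\<forall>m\<in>supp f. mon_le m (ell \<gamma>)"
  shows "\<forall>t\<in>iter_log_gens f \<gamma>. mon_less t mon_one"
proof -
  have "dom_mon f = ell \<gamma>"
    using assms by (intro dom_mon_eqI) (simp_all add: supp_def)
  then show ?thesis
    using eps_supp_neg[of f] assms(2) ell_inv_prod_neg unfolding iter_log_gens_def by auto
qed

lemma well_based_iter_log_gens: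
  assumes "f (ell \<gamma>) > 0" "\<forall>m\<in>supp f. mon_le m (ell \<gamma>)" "well_based (supp f)"
  shows "well_based (gen_monoid (iter_log_gens f \<gamma>))"
proof -
  have "well_based (range (\<lambda>k. ell_inv_prod \<gamma> (Suc k)))"
    by (rule well_based_range_decseq) (rule ell_inv_prod_decreasing)
  then have "well_based (iter_log_gens f \<gamma>)"
    unfolding iter_log_gens_def using well_based_eps_supp[OF assms(3)] by (rule well_based_Un[rotated])
  then show ?thesis
    using well_based_gen_monoid iter_log_gens_neg[OF assms(1,2)] by blast
qed

lemma iter_log_gens_mons_below:
  assumes "f (ell \<gamma>) > 0" "\<forall>m\<in>supp f. mon_le m (ell \<gamma>)"
    and f: "supp f \<subseteq> mons_below \<alpha>" and bound: "\<And>n. (ordsucc ^^ n) \<gamma> < \<alpha>"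
  shows "gen_monoid (iter_log_gens f \<gamma>) \<subseteq> mons_below \<alpha>"
proof -
  have "dom_mon f = ell \<gamma>"
    using assms by (intro dom_mon_eqI) (simp_all add: supp_def)
  moreover have "ell \<gamma> \<in> mons_below \<alpha>"
    using mons_below_ell bound[of 0] by simp
  ultimately have "eps_supp f \<subseteq> mons_below \<alpha>"
    using eps_supp_mons_below[OF f] by simp
  then show ?thesis
    unfolding iter_log_gens_def using ell_inv_prod_mons_below[OF bound]
    by (intro gen_monoid_mons_below) blast
qed

lemma supp_logn_ell_dominant:
  assumes "f (ell \<gamma>) > 0" "\<forall>m\<in>supp f. mon_le m (ell \<gamma>)"
  shows "supp (logn (Suc k) f) \<subseteq> insert (ell ((ordsucc ^^ Suc k) \<gamma>)) (gen_monoid (iter_log_gens f \<gamma>))"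
proof -
  have "mon_mult (ell_inv_prod \<gamma> k) ` gen_monoid (iter_log_gens f \<gamma>) \<subseteq> gen_monoid (iter_log_gens f \<gamma>)"
    using ell_inv_prod_in_gen_monoid gen_monoid_mult by blast
  then show ?thesis
    using logn_ell_dominant[OF assms _ ell_inv_prod_in_gen_monoid iter_log_gens_neg[OF assms], of k]
    unfolding iter_log_gens_def by blast
qed

lemma ser_pos_logn_ell_dominant:
  assumes pos: "f (ell \<gamma>) > 0" and dominated: "\<forall>m\<in>supp f. mon_le m (ell \<gamma>)"
  shows "ser_pos (logn n f)"
proof (cases n)
  case 0
  then show ?thesis
    using ser_pos_dominated[OF pos dominated] by (simp add: logn_def)
next
  case (Suc k)
  have "mon_le m (ell ((ordsucc ^^ Suc k) \<gamma>))" if m: "m \<in> supp (logn (Suc k) f)" for m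
  proof (cases "m = ell ((ordsucc ^^ Suc k) \<gamma>)")
    case False
    then have "m \<in> gen_monoid (iter_log_gens f \<gamma>)"
      using supp_logn_ell_dominant[OF pos dominated] m by blast
    then have "mon_le m mon_one"
      using gen_monoid_nonpos[OF iter_log_gens_neg[OF pos dominated]] by blast
    then show ?thesis
      using one_less_ell by (meson mon.le_less_trans mon.less_imp_le)
  qed simp
  moreover have "logn (Suc k) f (ell ((ordsucc ^^ Suc k) \<gamma>)) = 1"
    using logn_ell_dominant[OF pos dominated _ ell_inv_prod_in_gen_monoid iter_log_gens_neg[OF pos dominated]]
    unfolding iter_log_gens_def by blast
  ultimately have "ser_pos (logn (Suc k) f)"
    by (intro ser_pos_dominated[of _ "ell ((ordsucc ^^ Suc k) \<gamma>)"]) auto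
  then show ?thesis
    using Suc by simp
qed

lemma logn_ell_dominant_in_Lbelow:
  assumes pos: "f (ell \<gamma>) > 0" and dominated: "\<forall>m\<in>supp f. mon_le m (ell \<gamma>)"
    and f: "f \<in> Lbelow \<alpha>" and bound: "\<And>n. (ordsucc ^^ n) \<gamma> < \<alpha>"
  shows "logn (Suc k) f \<in> Lbelow \<alpha>"
proof -
  let ?H = "gen_monoid (iter_log_gens f \<gamma>)"
  have "well_based (supp f)" "supp f \<subseteq> mons_below \<alpha>"
    using f by (auto simp: Lbelow_def)
  then have "well_based (insert (ell ((ordsucc ^^ Suc k) \<gamma>)) ?H)"
    "insert (ell ((ordsucc ^^ Suc k) \<gamma>)) ?H \<subseteq> mons_below \<alpha>"
    using well_based_insert[OF well_based_iter_log_gens[OF pos dominated]] mons_below_ell[OF bound]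
      iter_log_gens_mons_below[OF pos dominated _ bound]
    by (simp_all del: funpow.simps)
  then show ?thesis
    using supp_logn_ell_dominant[OF pos dominated, of k] well_based_subset
    unfolding Lbelow_def by blast
qed

lemma summable_logn_ell_dominant:
  assumes pos: "f (ell \<gamma>) > 0" and dominated: "\<forall>m\<in>supp f. mon_le m (ell \<gamma>)"
    and f: "f \<in> Lbelow \<alpha>" and bound: "\<And>n. (ordsucc ^^ n) \<gamma> < \<alpha>"
  shows "summable_fam (\<lambda>n. logn n f) UNIV"
proof -
  let ?H = "gen_monoid (iter_log_gens f \<gamma>)"
  have "well_based (supp f)"
    using f by (simp add: Lbelow_def)
  note H_wb = well_based_iter_log_gens[OF pos dominated this]
  have coset: "mon_mult (ell_inv_prod \<gamma> k) h \<in> ?H" if "h \<in> ?H" for k h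
    using ell_inv_prod_in_gen_monoid that by (rule gen_monoid_mult)
  have supp: "supp (logn (Suc k) f) \<subseteq> insert (ell ((ordsucc ^^ Suc k) \<gamma>)) (mon_mult (ell_inv_prod \<gamma> k) ` ?H)" for k
    using logn_ell_dominant[OF pos dominated _ ell_inv_prod_in_gen_monoid iter_log_gens_neg[OF pos dominated]]
    unfolding iter_log_gens_def by blast
  have ell_dec: "mon_less (ell ((ordsucc ^^ Suc (Suc k)) \<gamma>)) (ell ((ordsucc ^^ Suc k) \<gamma>))" for k
    using ell_ordsucc_less[OF bound[of "Suc k"]] by simp
  have "summable_fam (\<lambda>k. logn (Suc k) f) UNIV"
    using summable_fam_coset[where F = "\<lambda>k. logn (Suc k) f" and l = "\<lambda>k. ell ((ordsucc ^^ Suc k) \<gamma>)"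
        and p = "ell_inv_prod \<gamma>", OF supp ell_dec ell_inv_prod_decreasing H_wb coset
        logn_ell_dominant_in_Lbelow[OF pos dominated f bound]] .
  moreover have "logn 0 f \<in> Lser"
    using f unfolding Lser_def by (auto simp: logn_def)
  ultimately show ?thesis
    by (rule summable_fam_Suc[of "\<lambda>n. logn n f"])
qed

lemma multipliable_logn_if_Llog_ell_dominant:
  assumes g: "g \<in> Lser" "ser_pos g"
    and pos: "Llog g (ell \<gamma>) > 0" and dominated: "\<forall>m\<in>supp (Llog g). mon_le m (ell \<gamma>)"
    and below: "Llog g \<in> Lbelow \<alpha>" and bound: "\<And>n. (ordsucc ^^ n) \<gamma> < \<alpha>"
  shows "multipliable (\<lambda>n. logn n g) UNIV"
proof -
  note summable = summable_logn_ell_dominant[OF pos dominated below bound]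
  then obtain \<alpha>' where \<alpha>': "\<And>n. logn n (Llog g) \<in> Lbelow \<alpha>'"
    unfolding summable_fam_def by blast
  have "logn n g \<in> Lser \<and> ser_pos (logn n g)" for n
  proof (cases n)
    case 0
    then show ?thesis using g by (simp add: logn_def)
  next
    case (Suc k)
    then have "logn n g = logn k (Llog g)"
      by (simp only: logn_Suc_right)
    then show ?thesis
      using \<alpha>'[of k] ser_pos_logn_ell_dominant[OF pos dominated, of k] unfolding Lser_def by auto
  qed
  moreover have "summable_fam (\<lambda>n. Llog (logn n g)) UNIV"
    using summable by (simp flip: logn_Suc logn_Suc_right)
  ultimately show ?thesis
    unfolding multipliable_def by blast
qed

theorem lemma4p7:
  fixes g :: "'o::wellorder ser"
  assumes ords: "\<forall>S::'o set. countable S \<longrightarrow> (\<exists>b. \<forall>s\<in>S. s < b)"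
    and "g \<in> Lser"
    and "pos_infinite g"
  shows "multipliable (\<lambda>n. logn n g) (UNIV :: nat set)"
proof -
  have unbounded: "\<exists>\<gamma>. \<beta> < \<gamma>" for \<beta> :: 'o
    using ords[rule_format, of "{\<beta>}"] by auto
  obtain \<alpha>0 where g: "g \<in> Lbelow \<alpha>0"
    using \<open>g \<in> Lser\<close> unfolding Lser_def by blast
  then have wb: "well_based (supp g)"
    by (simp add: Lbelow_def)
  note g_inf = pos_infiniteD[OF wb \<open>pos_infinite g\<close>]
  then have ne: "supp g \<noteq> {}"
    by (simp add: ser_pos_def)
  obtain \<gamma> where \<gamma>: "Llog g (ell \<gamma>) > 0" "\<forall>m\<in>supp (Llog g). mon_le m (ell \<gamma>)"
    using Llog_infinite_ell_dominant[OF unbounded wb ne g_inf(2)] by blast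
  have "countable (insert \<alpha>0 (range (\<lambda>n. (ordsucc ^^ n) \<gamma>)))"
    by simp
  then obtain \<alpha> where "\<forall>s\<in>insert \<alpha>0 (range (\<lambda>n. (ordsucc ^^ n) \<gamma>)). s < \<alpha>"
    using ords by blast
  then have \<alpha>: "\<alpha>0 < \<alpha>" "\<And>n. (ordsucc ^^ n) \<gamma> < \<alpha>"
    by simp_all
  show ?thesis
    using multipliable_logn_if_Llog_ell_dominant[OF \<open>g \<in> Lser\<close> g_inf(1) \<gamma> Llog_in_Lbelow[OF g ne \<alpha>(1)] \<alpha>(2)] .
qed

end
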